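(* Let $T$ and $T'$ be two different host trees of a hypertree $\mathcal{H}$. Then: (1) there exist edges $e\in E(T)\setminus E(T')$ and $e'\in E(T')\setminus E(T)$ such that $T-e+e'$ is also a host tree of $\mathcal{H}$; (2) if $|E(T)\setminus E(T')|=k$, there exists a sequence $T_1,T_2,\dots,T_{k+1}$ of host trees of $\mathcal{H}$ with $T_1=T$, $T_{k+1}=T'$ and, for $1\le i\le k$, $T_{i+1}=T_i-e_i+e_i'$ where $e_i\in E(T)$ and $e_i'\in E(T')$; furthermore, there is no shorter sequence satisfying the same conditions.
   Context: A hypergraph $\mathcal{H}$ has a finite vertex set $V(\mathcal{H})$ and a finite family of nonempty subsets (edges). A host tree is a tree on $V(\mathcal{H})$ in which every edge of $\mathcal{H}$ induces a connected subgraph; a hypertree is a hypergraph with a host tree. *)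

theory Defs
  imports Main
begin

definition hypergraph :: "'a set \<Rightarrow> 'a set set \<Rightarrow> bool" where
  "hypergraph V H \<longleftrightarrow> finite V \<and> finite H \<and> (\<forall>e\<in>H. e \<noteq> {} \<and> e \<subseteq> V)"

definition graph_on :: "'a set \<Rightarrow> 'a set set \<Rightarrow> bool" where
  "graph_on V E \<longleftrightarrow> (\<forall>e\<in>E. \<exists>u v. e = {u, v} \<and> u \<noteq> v \<and> u \<in> V \<and> v \<in> V)"

definition adj_in :: "'a set set \<Rightarrow> 'a set \<Rightarrow> ('a \<times> 'a) set" where
  "adj_in E S = {(u, v). {u, v} \<in> E \<and> u \<in> S \<and> v \<in> S}"

definition induced_connected :: "'a set set \<Rightarrow> 'a set \<Rightarrow> bool" where
  "induced_connected E S \<longleftrightarrow> (\<forall>u\<in>S. \<forall>v\<in>S. (u, v) \<in> (adj_in E S)\<^sup>*)"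

definition is_cycle :: "'a set set \<Rightarrow> 'a list \<Rightarrow> bool" where
  "is_cycle E vs \<longleftrightarrow> length vs \<ge> 3 \<and> distinct vs \<and>
     (\<forall>i < length vs. {vs ! i, vs ! ((i + 1) mod length vs)} \<in> E)"

definition acyclic_graph :: "'a set set \<Rightarrow> bool" where
  "acyclic_graph E \<longleftrightarrow> \<not> (\<exists>vs. is_cycle E vs)"

definition is_tree :: "'a set \<Rightarrow> 'a set set \<Rightarrow> bool" where
  "is_tree V E \<longleftrightarrow> graph_on V E \<and> induced_connected E V \<and> acyclic_graph E"

definition host_tree :: "'a set \<Rightarrow> 'a set set \<Rightarrow> 'a set set \<Rightarrow> bool" where
  "host_tree V H T \<longleftrightarrow> is_tree V T \<and> (\<forall>e\<in>H. induced_connected T e)"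

definition hypertree :: "'a set \<Rightarrow> 'a set set \<Rightarrow> bool" where
  "hypertree V H \<longleftrightarrow> hypergraph V H \<and> (\<exists>T. host_tree V H T)"

text \<open>A sequence T_1..T_{m+1} (list of length m+1) of host trees from T to T',
  each step T_{i+1} = T_i - e_i + e_i' with e_i in E(T), e_i' in E(T').\<close>
definition swap_seq :: "'a set \<Rightarrow> 'a set set \<Rightarrow> 'a set set \<Rightarrow> 'a set set \<Rightarrow> nat \<Rightarrow> 'a set set list \<Rightarrow> bool" where
  "swap_seq V H T T' m Ts \<longleftrightarrow> length Ts = m + 1 \<and> Ts ! 0 = T \<and> Ts ! m = T' \<and>
     (\<forall>i \<le> m. host_tree V H (Ts ! i)) \<and>
     (\<forall>i < m. \<exists>e\<in>T. \<exists>e'\<in>T'. Ts ! (i + 1) = insert e' (Ts ! i - {e}))"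

end

theory Submission
  imports Defs "HOL-Library.Transitive_Closure_Table"
begin

(* Let e = {u, v} be an edge of T - T'. Deleting e splits T into the component of u and the
   rest. The vertices lying in every hyperedge that contains e form a set S with u, v in S, and S
   is connected in T' because, in a forest, intersections of connected vertex sets are connected.
   Hence a T'-path from u to v inside S has an edge e' = {x, y} leaving the component of u.
   Then e' is not in T, T - e + e' is again a tree, and every hyperedge through e contains x and
   y, so all hyperedges stay connected. Each exchange lowers |T - T'| by one, which gives a
   sequence of length k; conversely a single exchange lowers |T - T'| by at most one. *)

lemma adj_in_sym: "(a, b) \<in> adj_in E S \<Longrightarrow> (b, a) \<in> adj_in E S"
  by (auto simp: adj_in_def insert_commute)

lemma rtrancl_adj_in_sym: "(a, b) \<in> (adj_in E S)\<^sup>* \<Longrightarrow> (b, a) \<in> (adj_in E S)\<^sup>*"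
proof -
  have "sym (adj_in E S)" by (rule symI) (rule adj_in_sym)
  then have "sym ((adj_in E S)\<^sup>*)" by (rule sym_rtrancl)
  then show "(a, b) \<in> (adj_in E S)\<^sup>* \<Longrightarrow> (b, a) \<in> (adj_in E S)\<^sup>*" by (rule symD)
qed

lemma rtrancl_adj_in_mono: "E \<subseteq> E' \<Longrightarrow> S \<subseteq> S' \<Longrightarrow> (adj_in E S)\<^sup>* \<subseteq> (adj_in E' S')\<^sup>*"
  by (rule rtrancl_mono) (auto simp: adj_in_def)

lemma rtrancl_obtain_distinct_path:
  assumes "(x, y) \<in> R\<^sup>*"
  obtains xs where "rtrancl_path (\<lambda>a b. (a, b) \<in> R) x xs y" "distinct (x # xs)"
proof -
  have "(\<lambda>a b. (a, b) \<in> R)\<^sup>*\<^sup>* x y" using assms by (simp add: rtranclp_rtrancl_eq)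
  then obtain xs where "rtrancl_path (\<lambda>a b. (a, b) \<in> R) x xs y"
    by (auto simp: rtranclp_eq_rtrancl_path)
  then obtain xs' where "rtrancl_path (\<lambda>a b. (a, b) \<in> R) x xs' y" "distinct (x # xs')"
    by (rule rtrancl_path_distinct)
  then show ?thesis by (rule that)
qed

lemma rtrancl_exit_edge:
  assumes "(a, b) \<in> R\<^sup>*" "a \<in> A" "b \<notin> A"
  obtains x y where "(x, y) \<in> R" "x \<in> A" "y \<notin> A"
  using assms by (induction rule: rtrancl_induct) blast+

lemma acyclic_graph_edge_is_bridge:
  assumes "acyclic_graph E" "{u, v} \<in> E" "u \<noteq> v"
  shows "(u, v) \<notin> (adj_in (E - {{u, v}}) UNIV)\<^sup>*"
proof
  assume "(u, v) \<in> (adj_in (E - {{u, v}}) UNIV)\<^sup>*"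
  then obtain ys where p: "rtrancl_path (\<lambda>a b. (a, b) \<in> adj_in (E - {{u, v}}) UNIV) u ys v"
    and d: "distinct (u # ys)" by (rule rtrancl_obtain_distinct_path)
  have ne: "ys \<noteq> []" using p assms(3) by (auto elim: rtrancl_path.cases)
  have lv: "last ys = v" using rtrancl_path_last[OF p ne] .
  have "length ys \<noteq> 1"
  proof
    assume "length ys = 1"
    with lv have "ys = [v]" by (auto simp: length_Suc_conv)
    with rtrancl_path_nth[OF p, of 0] show False by (auto simp: adj_in_def)
  qed
  with ne have l2: "length ys \<ge> 2" by (cases ys) (auto simp: Suc_le_eq)
  have "is_cycle E (u # ys)"
    unfolding is_cycle_def
  proof (intro conjI allI impI)
    show "3 \<le> length (u # ys)" using l2 by simp
    show "distinct (u # ys)" by fact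
    fix i assume i: "i < length (u # ys)"
    show "{(u # ys) ! i, (u # ys) ! ((i + 1) mod length (u # ys))} \<in> E"
    proof (cases "i < length ys")
      case True
      with rtrancl_path_nth[OF p True] show ?thesis by (auto simp: adj_in_def)
    next
      case False
      with i have "i = length ys" by simp
      then have "(u # ys) ! i = v" "(i + 1) mod length (u # ys) = 0"
        using lv ne by (auto simp: last_conv_nth)
      then show ?thesis using assms(2) by (simp add: insert_commute)
    qed
  qed
  then show False using assms(1) by (auto simp: acyclic_graph_def)
qed

lemma rtrancl_path_avoiding_edge:
  "rtrancl_path (\<lambda>a b. (a, b) \<in> adj_in E S) y ys z \<Longrightarrow> x \<notin> set (y # ys) \<Longrightarrow> x \<in> e \<Longrightarrow>
   (y, z) \<in> (adj_in (E - {e}) UNIV)\<^sup>*"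
proof (induction rule: rtrancl_path.induct)
  case (step a b bs c)
  then have "(a, b) \<in> adj_in (E - {e}) UNIV" by (auto simp: adj_in_def)
  with step show ?case by (auto intro: converse_rtrancl_into_rtrancl)
qed simp

lemma acyclic_simple_path_connected_Int:
  assumes "acyclic_graph E"
    and "rtrancl_path (\<lambda>a b. (a, b) \<in> adj_in E A) u xs v" "distinct (u # xs)"
    and "u \<in> B" "(u, v) \<in> (adj_in E B)\<^sup>*"
  shows "(u, v) \<in> (adj_in E (A \<inter> B))\<^sup>*"
  using assms(2-)
proof (induction rule: rtrancl_path.induct)
  case (step x y ys z)
  have xyA: "(x, y) \<in> adj_in E A" and dis: "distinct (x # y # ys)" by fact+
  show ?case
  proof (cases "y \<in> B")
    case True
    then have "(y, x) \<in> adj_in E B" using xyA step.prems(2) by (simp add: adj_in_def insert_commute)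
    then have "(y, z) \<in> (adj_in E B)\<^sup>*" using step.prems(3) by (rule converse_rtrancl_into_rtrancl)
    then have "(y, z) \<in> (adj_in E (A \<inter> B))\<^sup>*" using step.IH True dis by simp
    moreover have "(x, y) \<in> adj_in E (A \<inter> B)" using xyA True step.prems(2) by (simp add: adj_in_def)
    ultimately show ?thesis by (rule converse_rtrancl_into_rtrancl[rotated])
  next
    case False
    txt \<open>Both the path inside \<open>B\<close> from \<open>x\<close> to \<open>z\<close> and the rest of the simple path
      from \<open>y\<close> to \<open>z\<close> avoid the edge \<open>{x, y}\<close>, which would therefore lie on a cycle.\<close>
    have xy: "{x, y} \<in> E" "x \<noteq> y" using xyA dis by (auto simp: adj_in_def)
    have "(adj_in E B)\<^sup>* \<subseteq> (adj_in (E - {{x, y}}) UNIV)\<^sup>*"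
      by (rule rtrancl_mono) (use False in \<open>auto simp: adj_in_def doubleton_eq_iff\<close>)
    then have "(x, z) \<in> (adj_in (E - {{x, y}}) UNIV)\<^sup>*" using step.prems(3) by blast
    moreover have "(y, z) \<in> (adj_in (E - {{x, y}}) UNIV)\<^sup>*"
      using rtrancl_path_avoiding_edge[OF step.hyps(2), of x "{x, y}"] dis by simp
    ultimately have "(x, y) \<in> (adj_in (E - {{x, y}}) UNIV)\<^sup>*"
      by (blast intro: rtrancl_trans rtrancl_adj_in_sym)
    with acyclic_graph_edge_is_bridge[OF assms(1) xy] show ?thesis by contradiction
  qed
qed simp

lemma induced_connected_Int:
  assumes "acyclic_graph E" "induced_connected E A" "induced_connected E B"
  shows "induced_connected E (A \<inter> B)"
  unfolding induced_connected_def
proof (intro ballI)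
  fix u v assume uv: "u \<in> A \<inter> B" "v \<in> A \<inter> B"
  then have "(u, v) \<in> (adj_in E A)\<^sup>*" "(u, v) \<in> (adj_in E B)\<^sup>*"
    using assms by (auto simp: induced_connected_def)
  then obtain xs where "rtrancl_path (\<lambda>a b. (a, b) \<in> adj_in E A) u xs v" "distinct (u # xs)"
    by (metis rtrancl_obtain_distinct_path)
  with acyclic_simple_path_connected_Int[OF assms(1)] uv \<open>(u, v) \<in> (adj_in E B)\<^sup>*\<close>
  show "(u, v) \<in> (adj_in E (A \<inter> B))\<^sup>*" by blast
qed

lemma induced_connected_Inter:
  assumes "finite F" "acyclic_graph E" "induced_connected E V" "\<forall>h\<in>F. induced_connected E h"
  shows "induced_connected E (V \<inter> \<Inter>F)"
  using assms(1,4)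
proof (induction rule: finite_induct)
  case (insert h F)
  have "V \<inter> \<Inter>(insert h F) = h \<inter> (V \<inter> \<Inter>F)" by auto
  then show ?case using induced_connected_Int[OF assms(2)] insert by auto
qed (simp add: assms(3))

lemma is_cycle_edges_distinct:
  assumes "is_cycle E vs" "i < length vs" "j < length vs" "i \<noteq> j"
  shows "{vs ! i, vs ! ((i + 1) mod length vs)} \<noteq> {vs ! j, vs ! ((j + 1) mod length vs)}"
proof
  let ?n = "length vs"
  assume "{vs ! i, vs ! ((i + 1) mod ?n)} = {vs ! j, vs ! ((j + 1) mod ?n)}"
  moreover have n3: "?n \<ge> 3" and "distinct vs" using assms(1) by (auto simp: is_cycle_def)
  moreover have "(i + 1) mod ?n < ?n" "(j + 1) mod ?n < ?n"
    using n3 by (auto intro!: mod_less_divisor)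
  ultimately have i: "i = (j + 1) mod ?n" and j: "j = (i + 1) mod ?n"
    using assms(2-4) by (auto simp: doubleton_eq_iff nth_eq_iff_index_eq)
  from j have "j = ((j + 1) mod ?n + 1) mod ?n" unfolding i .
  also have "\<dots> = (j + 2) mod ?n" by (simp add: mod_Suc_eq)
  finally show False using n3 assms(3) by (cases "j + 2 < ?n") (auto simp: mod_if split: if_splits)
qed

lemma is_cycle_edge_not_bridge:
  assumes "is_cycle E vs" "i < length vs"
  shows "(vs ! ((i + 1) mod length vs), vs ! i)
    \<in> (adj_in (E - {{vs ! i, vs ! ((i + 1) mod length vs)}}) UNIV)\<^sup>*"
proof -
  let ?n = "length vs"
  let ?R = "adj_in (E - {{vs ! i, vs ! ((i + 1) mod ?n)}}) UNIV"
  have n3: "?n \<ge> 3" using assms(1) by (auto simp: is_cycle_def)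
  then have n0: "?n > 0" by linarith
  have walk: "(vs ! ((i + 1) mod ?n), vs ! ((i + 1 + k) mod ?n)) \<in> ?R\<^sup>*" if "k < ?n" for k
    using that
  proof (induction k)
    case (Suc k)
    define j where "j = (i + 1 + k) mod ?n"
    have j: "j < ?n" using n0 by (simp add: j_def)
    have "j \<noteq> i"
      using assms(2) Suc.prems by (cases "i + 1 + k < ?n") (auto simp: j_def mod_if le_mod_geq)
    with assms j have "{vs ! j, vs ! ((j + 1) mod ?n)} \<in> E - {{vs ! i, vs ! ((i + 1) mod ?n)}}"
      using is_cycle_edges_distinct[of E vs j i] by (auto simp: is_cycle_def)
    moreover have "(j + 1) mod ?n = (i + 1 + Suc k) mod ?n" by (simp add: j_def mod_Suc_eq)
    ultimately have "(vs ! ((i + 1 + k) mod ?n), vs ! ((i + 1 + Suc k) mod ?n)) \<in> ?R"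
      by (simp add: adj_in_def j_def)
    with Suc show ?case by (auto intro: rtrancl_into_rtrancl)
  qed simp
  have "(i + 1 + (?n - 1)) mod ?n = i" using n0 assms(2) by simp
  with walk[of "?n - 1"] n0 assms(2) show ?thesis by simp
qed

lemma is_tree_subset_eq:
  assumes "is_tree V T" "is_tree V T'" "T \<subseteq> T'"
  shows "T = T'"
proof (rule ccontr)
  assume "T \<noteq> T'"
  then obtain f where f: "f \<in> T'" "f \<notin> T" using assms(3) by blast
  then obtain a b where ab: "f = {a, b}" "a \<noteq> b" "a \<in> V" "b \<in> V"
    using assms(2) by (auto simp: is_tree_def graph_on_def)
  have "(a, b) \<in> (adj_in T V)\<^sup>*" using assms(1) ab by (auto simp: is_tree_def induced_connected_def)
  moreover have "(adj_in T V)\<^sup>* \<subseteq> (adj_in (T' - {{a, b}}) UNIV)\<^sup>*"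
    by (rule rtrancl_adj_in_mono) (use assms(3) f ab in auto)
  ultimately have "(a, b) \<in> (adj_in (T' - {{a, b}}) UNIV)\<^sup>*" by blast
  moreover have "acyclic_graph T'" using assms(2) by (simp add: is_tree_def)
  ultimately show False using acyclic_graph_edge_is_bridge[of T' a b] f ab by blast
qed

lemma rtrancl_adj_in_remove_edge:
  assumes "(u, w) \<in> (adj_in E h)\<^sup>*"
  shows "(u, w) \<in> (adj_in (E - {{u, v}}) h)\<^sup>* \<or> (v, w) \<in> (adj_in (E - {{u, v}}) h)\<^sup>*"
  using assms
proof (induction rule: rtrancl_induct)
  case (step w w')
  show ?case
  proof (cases "{w, w'} = {u, v}")
    case True
    then have "w' = u \<or> w' = v" by (auto simp: doubleton_eq_iff)
    then show ?thesis by auto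
  next
    case False
    then have "(w, w') \<in> adj_in (E - {{u, v}}) h" using step.hyps(2) by (simp add: adj_in_def)
    then show ?thesis using step.IH by (meson rtrancl_into_rtrancl)
  qed
qed simp

lemma induced_connected_exchange:
  assumes "induced_connected T h" and "{u, v} \<subseteq> h \<Longrightarrow> x \<in> h \<and> y \<in> h"
    and "(u, x) \<in> (adj_in (T - {{u, v}}) UNIV)\<^sup>*" "(u, y) \<notin> (adj_in (T - {{u, v}}) UNIV)\<^sup>*"
  shows "induced_connected (insert {x, y} (T - {{u, v}})) h"
proof (cases "{u, v} \<subseteq> h")
  case True
  txt \<open>Inside \<open>h\<close>, deleting \<open>{u, v}\<close> leaves every vertex reachable from \<open>u\<close> or from \<open>v\<close>;
    \<open>x\<close> lies on the side of \<open>u\<close> and \<open>y\<close> on the side of \<open>v\<close>, so \<open>{x, y}\<close> rejoins the two sides.\<close>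
  let ?R = "adj_in (T - {{u, v}}) UNIV"
  let ?C = "(adj_in (T - {{u, v}}) h)\<^sup>*"
  let ?D = "(adj_in (insert {x, y} (T - {{u, v}})) h)\<^sup>*"
  have CD: "?C \<subseteq> ?D" by (rule rtrancl_adj_in_mono) auto
  have CR: "?C \<subseteq> ?R\<^sup>*" by (rule rtrancl_adj_in_mono) auto
  have xy: "x \<in> h" "y \<in> h" using assms(2) True by auto
  have split: "(u, w) \<in> ?C \<or> (v, w) \<in> ?C" if "w \<in> h" for w
  proof (rule rtrancl_adj_in_remove_edge)
    show "(u, w) \<in> (adj_in T h)\<^sup>*" using assms(1) True that by (simp add: induced_connected_def)
  qed
  have vy: "(v, y) \<in> ?C" using split[OF xy(2)] CR assms(4) by blast
  have ux: "(u, x) \<in> ?C"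
  proof (rule ccontr)
    assume "(u, x) \<notin> ?C"
    then have "(v, x) \<in> ?R\<^sup>*" using split[OF xy(1)] CR by blast
    then have "(x, v) \<in> ?R\<^sup>*" by (rule rtrancl_adj_in_sym)
    moreover have "(v, y) \<in> ?R\<^sup>*" using vy CR by blast
    ultimately have "(u, y) \<in> ?R\<^sup>*" using assms(3) by (meson rtrancl_trans)
    with assms(4) show False ..
  qed
  have "(u, x) \<in> ?D" using ux CD by blast
  moreover have "(x, y) \<in> adj_in (insert {x, y} (T - {{u, v}})) h" using xy by (simp add: adj_in_def)
  ultimately have uy: "(u, y) \<in> ?D" by (rule rtrancl_into_rtrancl)
  have "(v, y) \<in> ?D" using vy CD by blast
  then have "(y, v) \<in> ?D" by (rule rtrancl_adj_in_sym)
  with uy have uv: "(u, v) \<in> ?D" by (rule rtrancl_trans)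
  have uw: "(u, w) \<in> ?D" if "w \<in> h" for w
    using split[OF that]
  proof
    assume "(v, w) \<in> ?C"
    with CD have "(v, w) \<in> ?D" by (rule subsetD)
    with uv show ?thesis by (rule rtrancl_trans)
  qed (rule subsetD[OF CD])
  show ?thesis unfolding induced_connected_def
  proof (intro ballI)
    fix a b assume "a \<in> h" "b \<in> h"
    with uw have "(u, a) \<in> ?D" "(u, b) \<in> ?D" by auto
    from rtrancl_adj_in_sym[OF this(1)] this(2) show "(a, b) \<in> ?D" by (rule rtrancl_trans)
  qed
next
  case False
  then have "{a, b} \<noteq> {u, v}" if "a \<in> h" "b \<in> h" for a b using that by auto
  then have "adj_in T h \<subseteq> adj_in (insert {x, y} (T - {{u, v}})) h" unfolding adj_in_def by blast
  then have "(adj_in T h)\<^sup>* \<subseteq> (adj_in (insert {x, y} (T - {{u, v}})) h)\<^sup>*" by (rule rtrancl_mono)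
  with assms(1) show ?thesis unfolding induced_connected_def by blast
qed

lemma acyclic_graph_exchange:
  assumes "acyclic_graph T" "(x, y) \<notin> (adj_in (T - {e}) UNIV)\<^sup>*"
  shows "acyclic_graph (insert {x, y} (T - {e}))"
  unfolding acyclic_graph_def
proof
  let ?T = "insert {x, y} (T - {e})"
  assume "\<exists>vs. is_cycle ?T vs"
  then obtain vs where cyc: "is_cycle ?T vs" by blast
  let ?n = "length vs"
  show False
  proof (cases "\<exists>i < ?n. {vs ! i, vs ! ((i + 1) mod ?n)} = {x, y}")
    case True
    then obtain i where i: "i < ?n" "{vs ! i, vs ! ((i + 1) mod ?n)} = {x, y}" by blast
    have "(vs ! ((i + 1) mod ?n), vs ! i) \<in> (adj_in (?T - {{x, y}}) UNIV)\<^sup>*"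
      using is_cycle_edge_not_bridge[OF cyc i(1)] i(2) by simp
    moreover have "(adj_in (?T - {{x, y}}) UNIV)\<^sup>* \<subseteq> (adj_in (T - {e}) UNIV)\<^sup>*"
      by (rule rtrancl_adj_in_mono) auto
    ultimately have "(vs ! ((i + 1) mod ?n), vs ! i) \<in> (adj_in (T - {e}) UNIV)\<^sup>*" by blast
    moreover from this have "(vs ! i, vs ! ((i + 1) mod ?n)) \<in> (adj_in (T - {e}) UNIV)\<^sup>*"
      by (rule rtrancl_adj_in_sym)
    ultimately have "(x, y) \<in> (adj_in (T - {e}) UNIV)\<^sup>*"
      using i(2) by (auto simp: doubleton_eq_iff)
    with assms(2) show False ..
  next
    case False
    then have "is_cycle T vs" using cyc by (auto simp: is_cycle_def)
    with assms(1) show False by (auto simp: acyclic_graph_def)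
  qed
qed

lemma host_tree_exchange:
  assumes "finite H" "host_tree V H T" "host_tree V H T'" "e \<in> T - T'"
  obtains e' where "e' \<in> T' - T" "host_tree V H (insert e' (T - {e}))"
proof -
  have tree: "is_tree V T" "is_tree V T'" using assms(2,3) by (auto simp: host_tree_def)
  obtain u v where uv: "e = {u, v}" "u \<noteq> v" "u \<in> V" "v \<in> V"
    using tree(1) assms(4) by (auto simp: is_tree_def graph_on_def)
  let ?R = "adj_in (T - {e}) UNIV"
  have "(u, v) \<notin> ?R\<^sup>*"
    using acyclic_graph_edge_is_bridge[of T u v] tree(1) assms(4) uv by (auto simp: is_tree_def)
  define S where "S = V \<inter> \<Inter>{h \<in> H. e \<subseteq> h}"
  have "induced_connected T' S" unfolding S_def
    by (rule induced_connected_Inter) (use assms(1,3) tree(2) in \<open>auto simp: host_tree_def is_tree_def\<close>)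
  then have "(u, v) \<in> (adj_in T' S)\<^sup>*" using uv by (auto simp: S_def induced_connected_def)
  moreover have "u \<in> {w. (u, w) \<in> ?R\<^sup>*}" "v \<notin> {w. (u, w) \<in> ?R\<^sup>*}"
    using \<open>(u, v) \<notin> ?R\<^sup>*\<close> by auto
  ultimately obtain x y where "(x, y) \<in> adj_in T' S" "x \<in> {w. (u, w) \<in> ?R\<^sup>*}" "y \<notin> {w. (u, w) \<in> ?R\<^sup>*}"
    by (rule rtrancl_exit_edge)
  then have xy: "(x, y) \<in> adj_in T' S" "(u, x) \<in> ?R\<^sup>*" "(u, y) \<notin> ?R\<^sup>*" by simp_all
  have "(x, y) \<notin> ?R\<^sup>*" using xy(2,3) by (meson rtrancl_trans)
  then have new: "{x, y} \<notin> T" using assms(4) xy(1) by (auto simp: adj_in_def)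
  have xyS: "{x, y} \<in> T'" "x \<in> S" "y \<in> S" using xy(1) by (auto simp: adj_in_def)
  let ?T = "insert {x, y} (T - {e})"
  have "graph_on V ?T" using tree xyS(1) by (auto simp: is_tree_def graph_on_def)
  moreover have "induced_connected ?T h" if "induced_connected T h" "e \<subseteq> h \<Longrightarrow> x \<in> h \<and> y \<in> h" for h
    using induced_connected_exchange[of T h u v x y] that xy(2,3) uv(1) by simp
  then have "induced_connected ?T V" "\<forall>h\<in>H. induced_connected ?T h"
    using tree(1) assms(2) xyS by (auto simp: is_tree_def host_tree_def S_def)
  moreover have "acyclic_graph ?T"
    using acyclic_graph_exchange tree(1) \<open>(x, y) \<notin> ?R\<^sup>*\<close> by (auto simp: is_tree_def)
  ultimately have "host_tree V H ?T" by (simp add: host_tree_def is_tree_def)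
  with new xyS(1) show ?thesis using that by blast
qed

lemma graph_on_finite: "finite V \<Longrightarrow> graph_on V E \<Longrightarrow> finite E"
  by (rule finite_subset[of _ "Pow V"]) (auto simp: graph_on_def)

lemma card_le_Suc_card_if_Diff_singleton_subset:
  assumes "A - {a} \<subseteq> B" "finite B"
  shows "card A \<le> Suc (card B)"
proof -
  have "A \<subseteq> insert a B" using assms(1) by blast
  then have "finite A" using assms(2) by (meson finite_insert finite_subset)
  then have "card A \<le> Suc (card (A - {a}))" by (cases "a \<in> A") (auto simp: card_Suc_Diff1)
  also have "card (A - {a}) \<le> card B" using assms by (rule card_mono[rotated])
  finally show ?thesis by simp
qed

text \<open>The set \<open>X\<close> of removable edges is kept apart from the initial tree, because the
  induction restarts from a different tree while the edges must still come from the original one.\<close>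

lemma host_tree_exchange_sequence:
  assumes "finite V" "finite H" "host_tree V H T'"
    and "host_tree V H T" "T - T' \<subseteq> X" "card (T - T') = k"
  shows "\<exists>Ts. length Ts = k + 1 \<and> Ts ! 0 = T \<and> Ts ! k = T' \<and> (\<forall>i \<le> k. host_tree V H (Ts ! i)) \<and>
    (\<forall>i < k. \<exists>e\<in>X. \<exists>e'\<in>T'. Ts ! (i + 1) = insert e' (Ts ! i - {e}))"
  using assms(4-)
proof (induction k arbitrary: T)
  case 0
  have "finite T" using assms(1) "0.prems"(1) by (auto simp: host_tree_def is_tree_def intro: graph_on_finite)
  with "0.prems"(3) have "T \<subseteq> T'" by simp
  moreover have "is_tree V T" "is_tree V T'" using "0.prems"(1) assms(3) by (simp_all add: host_tree_def)
  ultimately have "T = T'" by (intro is_tree_subset_eq)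
  with "0.prems"(1) show ?case by (intro exI[of _ "[T]"]) simp
next
  case (Suc k)
  then have "T - T' \<noteq> {}" using card_gt_0_iff[of "T - T'"] by simp
  then obtain e where e: "e \<in> T - T'" by blast
  obtain e' where e': "e' \<in> T' - T" and tree: "host_tree V H (insert e' (T - {e}))"
    using host_tree_exchange[OF assms(2) Suc.prems(1) assms(3) e] .
  have "insert e' (T - {e}) - T' = (T - T') - {e}" using e' by auto
  with Suc.prems e have "card (insert e' (T - {e}) - T') = k" "insert e' (T - {e}) - T' \<subseteq> X"
    by auto
  from Suc.IH[OF tree this(2,1)] obtain Ts where Ts: "length Ts = k + 1" "Ts ! 0 = insert e' (T - {e})"
    "Ts ! k = T'" "\<forall>i \<le> k. host_tree V H (Ts ! i)"
    "\<forall>i < k. \<exists>e\<in>X. \<exists>e'\<in>T'. Ts ! (i + 1) = insert e' (Ts ! i - {e})"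
    by blast
  have "\<forall>i \<le> Suc k. host_tree V H ((T # Ts) ! i)"
    using Ts(4) Suc.prems(1) by (auto simp: nth_Cons split: nat.split)
  moreover have "\<forall>i < Suc k. \<exists>e\<in>X. \<exists>e'\<in>T'. (T # Ts) ! (i + 1) = insert e' ((T # Ts) ! i - {e})"
    using Ts(2,5) e e' Suc.prems(2) by (auto simp: nth_Cons split: nat.split)
  ultimately show ?case using Ts(1,3) by (intro exI[of _ "T # Ts"]) simp
qed

lemma swap_seq_length_ge:
  assumes "finite V" "swap_seq V H T T' m Ts"
  shows "card (T - T') \<le> m"
proof -
  have first: "Ts ! 0 = T" and last: "Ts ! m = T'" and trees: "\<forall>i \<le> m. host_tree V H (Ts ! i)"
    and steps: "\<forall>i < m. \<exists>e\<in>T. \<exists>e'\<in>T'. Ts ! (i + 1) = insert e' (Ts ! i - {e})"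
    using assms(2) unfolding swap_seq_def by simp_all
  have "card (T - T') \<le> card (Ts ! i - T') + i" if "i \<le> m" for i
    using that
  proof (induction i)
    case 0
    then show ?case using first by simp
  next
    case (Suc i)
    then have "i < m" by simp
    with steps obtain e e' where step: "Ts ! (i + 1) = insert e' (Ts ! i - {e})" by auto
    from trees Suc.prems have "host_tree V H (Ts ! (i + 1))" by simp
    then have "finite (Ts ! (i + 1))"
      using assms(1) by (auto simp: host_tree_def is_tree_def intro: graph_on_finite)
    moreover have "Ts ! i - T' - {e} \<subseteq> Ts ! (i + 1) - T'" using step by auto
    ultimately have "card (Ts ! i - T') \<le> Suc (card (Ts ! (i + 1) - T'))"
      by (intro card_le_Suc_card_if_Diff_singleton_subset) auto
    with Suc show ?case by simp
  qed
  from this[of m] last show ?thesis by simp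
qed

theorem mainTheorem19:
  fixes V :: "'a set" and H T T' :: "'a set set"
  assumes "hypertree V H"
    and "host_tree V H T" and "host_tree V H T'" and "T \<noteq> T'"
  shows "(\<exists>e \<in> T - T'. \<exists>e' \<in> T' - T. host_tree V H (insert e' (T - {e})))
    \<and> (\<forall>k. card (T - T') = k \<longrightarrow>
          (\<exists>Ts. swap_seq V H T T' k Ts) \<and> (\<forall>m Ts. swap_seq V H T T' m Ts \<longrightarrow> k \<le> m))"
proof (intro conjI allI impI)
  have fin: "finite V" "finite H" using assms(1) by (auto simp: hypertree_def hypergraph_def)
  have "T \<subseteq> T' \<Longrightarrow> T = T'" using is_tree_subset_eq[of V T T'] assms(2,3) by (simp add: host_tree_def)
  with assms(4) have "\<not> T \<subseteq> T'" by blast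
  then obtain e where "e \<in> T - T'" by blast
  with host_tree_exchange[OF fin(2) assms(2,3)]
  show "\<exists>e \<in> T - T'. \<exists>e' \<in> T' - T. host_tree V H (insert e' (T - {e}))" by blast
  fix k assume k: "card (T - T') = k"
  show "\<exists>Ts. swap_seq V H T T' k Ts"
    using host_tree_exchange_sequence[OF fin assms(3,2) Diff_subset k] unfolding swap_seq_def .
  show "k \<le> m" if "swap_seq V H T T' m Ts" for m Ts
    using swap_seq_length_ge[OF fin(1) that] k by simp
qed

end
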